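(* Let $(\pi_1,\dots,\pi_R)$ be arbitrary probabilities (nonnegative, summing to 1), $N\in\mathbb N$, and $U$ uniform on $(0,1)$. Define $$N_j=\Big|\Big[N\sum_{i=1}^{j-1}\pi_i+U,\ N\sum_{i=1}^{j}\pi_i+U\Big)\cap\{1,2,\dots,N\}\Big|,\qquad j=1,\dots,R.$$ Then for any $j<k$, $\operatorname{Cov}(N_j,N_k)=F(r_l,r_m,r_u)$ for a function $F$ depending only on $r_l=N\pi_j\bmod 1$, $r_u=N\pi_k\bmod1$ and $r_m=N\sum_{i=j+1}^{k-1}\pi_i\bmod1$. Moreover, for all $r_l,r_u\in[0,1)$, $\int_0^1F(r_l,r,r_u)\,dr=0$.
   Context: $|A|$ denotes the number of elements of a finite set $A$. *)

theory Defs
  imports "HOL-Probability.Probability"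
begin

definition unif01 :: "real measure" where
  "unif01 = uniform_measure lborel {0<..<1}"

definition covar :: "'a measure \<Rightarrow> ('a \<Rightarrow> real) \<Rightarrow> ('a \<Rightarrow> real) \<Rightarrow> real" where
  "covar M X Y = (\<integral>x. X x * Y x \<partial>M) - (\<integral>x. X x \<partial>M) * (\<integral>x. Y x \<partial>M)"

definition sys_count :: "nat \<Rightarrow> (nat \<Rightarrow> real) \<Rightarrow> nat \<Rightarrow> real \<Rightarrow> nat" where
  "sys_count N p j u = card {n \<in> {1..N}.
      real N * (\<Sum>i=1..<j. p i) + u \<le> real n \<and> real n < real N * (\<Sum>i=1..j. p i) + u}"

end

theory Submission
  imports Defs
begin

(* For 0 < u < 1 and 0 <= a <= b <= N, the number of integers in [a + u, b + u) \<inter> {1..N} is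
   floor b - floor a + I b u - I a u, where I x u = 1 if u > 1 - frac x and 0 otherwise.
   So N_j and N_k are, up to constants, differences of the indicators I x U at consecutive
   cumulative points x = N (pi_1 + ... + pi_i), and Cov(N_j, N_k) is a signed sum of four terms
   Cov(I x U, I y U) = min (frac x) (frac y) - frac x * frac y = (q x + q y - q (x - y)) / 2
   with q x = frac x * (1 - frac x) = Var(I x U): the difference of the two indicators is, up
   to sign, the indicator of an interval of length frac (x - y) or frac (y - x).  The terms q at
   the cumulative points cancel, leaving q evaluated at sums of the gaps N pi_j, N (pi_(j+1) +
   ... + pi_(k-1)), N pi_k, which only depend on r_l, r_m, r_u.  Since q is 1-periodic with mean
   1/6, integrating over r_m gives 1/6 + 1/6 - 1/6 - 1/6 = 0. *)

definition frac_var :: "real \<Rightarrow> real" where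
  "frac_var x = frac x * (1 - frac x)"

lemma frac_var_measurable [measurable]: "frac_var \<in> borel_measurable borel"
  unfolding frac_var_def frac_def by measurable

lemma frac_var_cong:
  assumes "x - y \<in> \<int>"
  shows "frac_var x = frac_var y"
proof -
  have "frac x = frac (y + (x - y))" by simp
  also have "\<dots> = frac y" using assms by (rule frac_add_int_right)
  finally show ?thesis by (simp add: frac_var_def)
qed

lemma frac_var_frac [simp]: "frac_var (frac x) = frac_var x"
  by (simp add: frac_var_def)

lemma frac_var_minus [simp]: "frac_var (- x) = frac_var x"
  by (simp add: frac_var_def frac_neg algebra_simps)

lemma frac_var_nonneg: "0 \<le> frac_var x"
  by (simp add: frac_var_def frac_lt_1 less_imp_le)

lemma frac_var_le_quarter: "frac_var x \<le> 1/4"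
proof -
  have "0 \<le> (frac x - 1/2)\<^sup>2" by simp
  then show ?thesis by (simp add: frac_var_def power2_eq_square algebra_simps)
qed

lemma frac_var_on_unit_interval:
  assumes "of_int n \<le> x" "x \<le> of_int n + 1"
  shows "frac_var x = (x - of_int n) * (of_int n + 1 - x)"
proof (cases "x = of_int n + 1")
  case False
  then have "frac x = x - of_int n" using assms by (simp add: frac_unique_iff)
  then show ?thesis unfolding frac_var_def by (simp only:) (simp add: algebra_simps)
qed (simp add: frac_var_def)

lemma frac_var_shift_has_integral: "((\<lambda>r. frac_var (r + s)) has_integral 1/6) {0..1}"
proof -
  define P :: "real \<Rightarrow> real" where "P t = t\<^sup>2 / 2 - t ^ 3 / 3" for t
  have piece: "((\<lambda>r. frac_var (r + s)) has_integral P (b + s - n) - P (a + s - n)) {a..b}"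
    if "of_int n \<le> a + s" "a \<le> b" "b + s \<le> of_int n + 1" for n :: int and a b :: real
  proof (rule has_integral_eq[OF _ fundamental_theorem_of_calculus])
    show "(r + s - n) * (n + 1 - (r + s)) = frac_var (r + s)" if "r \<in> {a..b}" for r
      using that \<open>of_int n \<le> a + s\<close> \<open>b + s \<le> of_int n + 1\<close>
      by (subst frac_var_on_unit_interval[of n]) auto
    show "((\<lambda>r. P (r + s - n)) has_vector_derivative (r + s - n) * (n + 1 - (r + s)))
        (at r within {a..b})" for r
      unfolding P_def has_real_derivative_iff_has_vector_derivative[symmetric]
      by (auto intro!: derivative_eq_intros simp: power2_eq_square field_simps)
  qed fact
  let ?m = "\<lfloor>s\<rfloor> + 1 - s"
  have "((\<lambda>r. frac_var (r + s)) has_integral P 1 - P (frac s)) {0..?m}"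
    using piece[of "\<lfloor>s\<rfloor>" 0 ?m] by (simp add: frac_def)
  moreover have "((\<lambda>r. frac_var (r + s)) has_integral P (frac s) - P 0) {?m..1}"
    using piece[of "\<lfloor>s\<rfloor> + 1" ?m 1] frac_lt_1[of s] by (simp add: frac_def)
  ultimately have "((\<lambda>r. frac_var (r + s)) has_integral (P 1 - P (frac s)) + (P (frac s) - P 0)) {0..1}"
    by (rule has_integral_combine[rotated 2]) linarith+
  then show ?thesis by (simp add: P_def)
qed

lemma bounded_has_integral_interval_integral:
  fixes f :: "real \<Rightarrow> real"
  assumes [measurable]: "f \<in> borel_measurable borel"
    and bound: "\<And>x. \<bar>f x\<bar> \<le> B" and "a \<le> b" and f: "(f has_integral I) {a..b}"
  shows "interval_lebesgue_integrable lborel a b f" "(LBINT x=a..b. f x) = I"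
proof -
  have "set_integrable lborel {a..b} f"
    by (rule set_integrable_bound[OF borel_integrable_atLeastAtMost'[of a b "\<lambda>_. B"]])
      (use bound in \<open>auto simp: set_borel_measurable_def intro!: AE_I2 order_trans[OF _ abs_ge_self]\<close>)
  then show "interval_lebesgue_integrable lborel a b f"
    unfolding interval_lebesgue_integrable_def using \<open>a \<le> b\<close>
    by (auto intro: set_integrable_subset)
  show "(LBINT x=a..b. f x) = I"
    using interval_integral_eq_integral[OF \<open>a \<le> b\<close> \<open>set_integrable lborel {a..b} f\<close>] f
    by (simp add: integral_unique)
qed

lemma frac_var_shift_interval_integral:
  "interval_lebesgue_integrable lborel 0 1 (\<lambda>r. frac_var (r + s))"
  "(LBINT r=0..1. frac_var (r + s)) = 1/6"
  using bounded_has_integral_interval_integral[where B="1/4", OF _ _ _ frac_var_shift_has_integral]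
    frac_var_nonneg frac_var_le_quarter by (auto simp: zero_ereal_def one_ereal_def)

definition sys_cov :: "real \<Rightarrow> real \<Rightarrow> real \<Rightarrow> real" where
  "sys_cov x y z = (frac_var y + frac_var (x + y + z) - frac_var (y + z) - frac_var (x + y)) / 2"

lemma sys_cov_frac: "sys_cov (frac x) (frac y) (frac z) = sys_cov x y z"
proof -
  have "frac_var (frac x + frac y) = frac_var (x + y)" "frac_var (frac y + frac z) = frac_var (y + z)"
    "frac_var (frac x + frac y + frac z) = frac_var (x + y + z)"
    by (intro frac_var_cong; simp add: frac_def)+
  then show ?thesis by (simp add: sys_cov_def)
qed

lemma sys_cov_interval_integral:
  "interval_lebesgue_integrable lborel 0 1 (\<lambda>r. sys_cov x r z)"
  "(LBINT r=0..1. sys_cov x r z) = 0"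
proof -
  have "(\<lambda>r. sys_cov x r z) =
      (\<lambda>r. (frac_var r + frac_var (r + (x + z)) - frac_var (r + z) - frac_var (r + x)) / 2)"
    by (simp add: sys_cov_def algebra_simps)
  then show "interval_lebesgue_integrable lborel 0 1 (\<lambda>r. sys_cov x r z)"
    "(LBINT r=0..1. sys_cov x r z) = 0"
    using frac_var_shift_interval_integral[where s=0] by (simp_all add: frac_var_shift_interval_integral)
qed

lemma covar_cong_AE:
  assumes [measurable]: "f \<in> borel_measurable M" "f' \<in> borel_measurable M"
    "g \<in> borel_measurable M" "g' \<in> borel_measurable M"
    and "AE x in M. f x = f' x" "AE x in M. g x = g' x"
  shows "covar M f g = covar M f' g'"
  unfolding covar_def using assms(5,6)
  by (intro arg_cong2[where f="(-)"] arg_cong2[where f="(*)"] integral_cong_AE; auto)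

lemma covar_indicator:
  assumes "prob_space M" "A \<in> sets M" "B \<in> sets M"
  shows "covar M (indicator A) (indicator B) = measure M (A \<inter> B) - measure M A * measure M B"
proof -
  interpret prob_space M by fact
  show ?thesis
    using assms(2,3)
    by (simp add: covar_def indicator_inter_arith[symmetric] Int_absorb2 sets.sets_into_space)
qed

lemma covar_const_add_indicator_diff:
  assumes "prob_space M" and [measurable]: "A \<in> sets M" "A' \<in> sets M" "B \<in> sets M" "B' \<in> sets M"
  shows "covar M (\<lambda>x. c + indicator A x - indicator A' x) (\<lambda>x. d + indicator B x - indicator B' x) =
    covar M (indicator A) (indicator B) - covar M (indicator A) (indicator B')
    - covar M (indicator A') (indicator B) + covar M (indicator A') (indicator B')"
proof -
  interpret prob_space M by fact
  have [simp]: "integrable M (indicator S :: 'a \<Rightarrow> real)" if "S \<in> sets M" for S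
    using that by (simp add: less_top[symmetric])
  show ?thesis
    unfolding covar_def
    by (simp add: algebra_simps indicator_inter_arith[symmetric] sets.Int prob_space
        Bochner_Integration.integral_add Bochner_Integration.integral_diff)
qed

lemma prob_space_unif01: "prob_space unif01"
  unfolding unif01_def by (rule prob_space_uniform_measure) auto

lemma sets_unif01 [simp, measurable_cong]: "sets unif01 = sets borel"
  by (simp add: unif01_def)

lemma AE_unif01I: "(\<And>u. 0 < u \<Longrightarrow> u < 1 \<Longrightarrow> P u) \<Longrightarrow> AE u in unif01. P u"
  unfolding unif01_def by (rule AE_uniform_measureI) (auto intro!: AE_I2)

lemma measure_unif01_greaterThan:
  assumes "0 \<le> t" "t \<le> 1"
  shows "measure unif01 {t<..} = 1 - t"
proof -
  have "measure unif01 {t<..} = measure lborel ({0<..<1} \<inter> {t<..}) / measure lborel {0<..<1::real}"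
    unfolding unif01_def by (rule measure_uniform_measure) auto
  also have "{0<..<1} \<inter> {t<..} = {t<..<1::real}" using assms by auto
  finally show ?thesis using assms by simp
qed

lemma covar_unif01_indicator_greaterThan:
  assumes "s \<in> {0..1}" "t \<in> {0..1}"
  shows "covar unif01 (indicator {s<..}) (indicator {t<..}) = (1 - max s t) - (1 - s) * (1 - t)"
proof -
  have "{s<..} \<inter> {t<..} = {max s t<..}" by auto
  moreover have "measure unif01 {max s t<..} = 1 - max s t"
    using assms by (intro measure_unif01_greaterThan) auto
  ultimately show ?thesis
    using assms by (simp add: covar_indicator[OF prob_space_unif01] measure_unif01_greaterThan)
qed

lemma min_diff_mult_eq_frac_var:
  assumes "x \<in> {0..<1}" "y \<in> {0..<1}"
  shows "min x y - x * y = (frac_var x + frac_var y - frac_var (x - y)) / 2"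
proof -
  have "frac (x - y) = (if y \<le> x then x - y else x - y + 1)"
    using assms by (auto simp: frac_unique_iff)
  then show ?thesis
    using assms by (simp add: frac_var_def min_def algebra_simps)
qed

lemma covar_unif01_indicator_frac:
  "covar unif01 (indicator {1 - frac x<..}) (indicator {1 - frac y<..}) =
    (frac_var x + frac_var y - frac_var (x - y)) / 2"
proof -
  have "covar unif01 (indicator {1 - frac x<..}) (indicator {1 - frac y<..}) =
      (1 - max (1 - frac x) (1 - frac y)) - (1 - (1 - frac x)) * (1 - (1 - frac y))"
    by (rule covar_unif01_indicator_greaterThan) (auto simp: frac_lt_1 less_imp_le)
  also have "\<dots> = min (frac x) (frac y) - frac x * frac y"
    by (simp add: max_def min_def)
  also have "\<dots> = (frac_var (frac x) + frac_var (frac y) - frac_var (frac x - frac y)) / 2"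
    by (rule min_diff_mult_eq_frac_var) (auto simp: frac_lt_1)
  also have "frac_var (frac x - frac y) = frac_var (x - y)"
    by (rule frac_var_cong) (simp add: frac_def)
  finally show ?thesis by simp
qed

lemma covar_unif01_indicator_frac_diff:
  "covar unif01 (\<lambda>u. k + indicator {1 - frac b<..} u - indicator {1 - frac a<..} u)
      (\<lambda>u. l + indicator {1 - frac d<..} u - indicator {1 - frac c<..} u) =
    sys_cov (b - a) (c - b) (d - c)"
proof -
  have "frac_var (b - d) = frac_var (d - b)" "frac_var (a - d) = frac_var (d - a)"
    "frac_var (a - c) = frac_var (c - a)" "frac_var (b - c) = frac_var (c - b)"
    using frac_var_minus[of "d - b"] frac_var_minus[of "d - a"] frac_var_minus[of "c - a"]
      frac_var_minus[of "c - b"] by simp_all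
  moreover have "sys_cov (b - a) (c - b) (d - c) =
      (frac_var (c - b) + frac_var (d - a) - frac_var (d - b) - frac_var (c - a)) / 2"
    by (simp add: sys_cov_def)
  ultimately show ?thesis
    by (simp add: covar_const_add_indicator_diff[OF prob_space_unif01] covar_unif01_indicator_frac)
      (simp add: field_simps)
qed

lemma card_nat_in_real_interval:
  assumes "0 < x" "x \<le> y" "y < real N + 1"
  shows "real (card {n \<in> {1..N}. x \<le> real n \<and> real n < y}) = of_int \<lceil>y\<rceil> - of_int \<lceil>x\<rceil>"
proof -
  have "{n \<in> {1..N}. x \<le> real n \<and> real n < y} = {nat \<lceil>x\<rceil>..<nat \<lceil>y\<rceil>}"
    using assms by (auto simp: ceiling_le_iff less_ceiling_iff le_nat_iff zless_nat_eq_int_zless)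
  moreover have "0 \<le> \<lceil>x\<rceil>" "\<lceil>x\<rceil> \<le> \<lceil>y\<rceil>"
    using assms by (auto intro: ceiling_mono)
  ultimately show ?thesis by (simp only: of_nat_diff nat_mono of_nat_nat order_trans card_atLeastLessThan)
qed

lemma ceiling_add_less_one:
  assumes "0 < u" "u < 1"
  shows "of_int \<lceil>x + u\<rceil> = of_int \<lfloor>x\<rfloor> + 1 + (indicator {1 - frac x<..} u :: real)"
proof -
  have "\<lceil>x + u\<rceil> = \<lceil>frac x + u\<rceil> + \<lfloor>x\<rfloor>"
    using ceiling_add_of_int[of "frac x + u" "\<lfloor>x\<rfloor>"] by (simp add: frac_def)
  also have "\<lceil>frac x + u\<rceil> = (if 1 - frac x < u then 2 else 1)"
    using assms frac_lt_1[of x] frac_ge_0[of x] by (intro ceiling_unique) (auto intro: add_nonneg_pos)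
  finally show ?thesis by (simp add: indicator_def)
qed

lemma card_shifted_interval:
  assumes "0 \<le> a" "a \<le> b" "b \<le> real N" "0 < u" "u < 1"
  shows "real (card {n \<in> {1..N}. a + u \<le> real n \<and> real n < b + u}) =
    of_int (\<lfloor>b\<rfloor> - \<lfloor>a\<rfloor>) + indicator {1 - frac b<..} u - indicator {1 - frac a<..} u"
  using assms card_nat_in_real_interval[of "a + u" "b + u" N]
    ceiling_add_less_one[of u a] ceiling_add_less_one[of u b] by simp

lemma partial_sums_bounds:
  fixes p :: "nat \<Rightarrow> real"
  assumes "\<forall>i\<in>{1..R}. 0 \<le> p i" "(\<Sum>i=1..R. p i) = 1" "m \<le> R"
  shows "0 \<le> (\<Sum>i=1..<m. p i)" "(\<Sum>i=1..<m. p i) \<le> (\<Sum>i=1..m. p i)" "(\<Sum>i=1..m. p i) \<le> 1"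
proof -
  show "0 \<le> (\<Sum>i=1..<m. p i)" "(\<Sum>i=1..<m. p i) \<le> (\<Sum>i=1..m. p i)"
    using assms by (auto intro!: sum_nonneg sum_mono2)
  have "(\<Sum>i=1..m. p i) \<le> (\<Sum>i=1..R. p i)" using assms by (intro sum_mono2) auto
  then show "(\<Sum>i=1..m. p i) \<le> 1" using assms by simp
qed

lemma sys_count_measurable [measurable]: "(\<lambda>u. real (sys_count N p j u)) \<in> borel_measurable borel"
proof -
  have "sys_count N p j u = (\<Sum>n\<in>{1..N}.
      if real N * (\<Sum>i=1..<j. p i) + u \<le> real n \<and> real n < real N * (\<Sum>i=1..j. p i) + u then 1 else 0)" for u
    unfolding sys_count_def card_eq_sum by (rule sum.inter_filter) simp
  then have "(\<lambda>u. real (sys_count N p j u)) = (\<lambda>u. \<Sum>n\<in>{1..N}. real (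
      if real N * (\<Sum>i=1..<j. p i) + u \<le> real n \<and> real n < real N * (\<Sum>i=1..j. p i) + u then 1 else 0))"
    by (simp only: of_nat_sum)
  also have "\<dots> \<in> borel_measurable borel" by measurable
  finally show ?thesis .
qed

lemma sys_count_AE_eq:
  fixes N :: nat and p :: "nat \<Rightarrow> real"
  assumes "\<forall>i\<in>{1..R}. 0 \<le> p i" "(\<Sum>i=1..R. p i) = 1" "m \<le> R"
  defines "a \<equiv> real N * (\<Sum>i=1..<m. p i)" and "b \<equiv> real N * (\<Sum>i=1..m. p i)"
  shows "AE u in unif01. real (sys_count N p m u) =
    of_int (\<lfloor>b\<rfloor> - \<lfloor>a\<rfloor>) + indicator {1 - frac b<..} u - indicator {1 - frac a<..} u"
proof (rule AE_unif01I)
  fix u :: real assume "0 < u" "u < 1"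
  moreover note partial_sums_bounds[OF assms(1-3)]
  ultimately show "real (sys_count N p m u) =
      of_int (\<lfloor>b\<rfloor> - \<lfloor>a\<rfloor>) + indicator {1 - frac b<..} u - indicator {1 - frac a<..} u"
    unfolding sys_count_def a_def b_def
    by (intro card_shifted_interval) (auto intro: mult_left_mono mult_left_le)
qed

theorem lemma2:
  shows "\<exists>F :: real \<Rightarrow> real \<Rightarrow> real \<Rightarrow> real.
     (\<forall>(R::nat) (p::nat \<Rightarrow> real) (N::nat) (j::nat) (k::nat).
        (\<forall>i\<in>{1..R}. 0 \<le> p i) \<and> (\<Sum>i=1..R. p i) = 1 \<and> 1 \<le> j \<and> j < k \<and> k \<le> R \<longrightarrow>
        covar unif01 (\<lambda>u. real (sys_count N p j u)) (\<lambda>u. real (sys_count N p k u))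
          = F (frac (real N * p j)) (frac (real N * (\<Sum>i=j+1..<k. p i))) (frac (real N * p k)))
   \<and> (\<forall>rl ru. 0 \<le> rl \<and> rl < 1 \<and> 0 \<le> ru \<and> ru < 1 \<longrightarrow>
        interval_lebesgue_integrable lborel 0 1 (\<lambda>r. F rl r ru) \<and> (LBINT r=0..1. F rl r ru) = 0)"
proof (intro exI[of _ sys_cov] conjI allI impI)
  fix R N j k :: nat and p :: "nat \<Rightarrow> real"
  assume "(\<forall>i\<in>{1..R}. 0 \<le> p i) \<and> (\<Sum>i=1..R. p i) = 1 \<and> 1 \<le> j \<and> j < k \<and> k \<le> R"
  then have distr: "\<forall>i\<in>{1..R}. 0 \<le> p i" "(\<Sum>i=1..R. p i) = 1" and jk: "1 \<le> j" "j < k" "k \<le> R"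
    by auto
  define a b c d where "a = real N * (\<Sum>i=1..<j. p i)" and "b = real N * (\<Sum>i=1..j. p i)"
    and "c = real N * (\<Sum>i=1..<k. p i)" and "d = real N * (\<Sum>i=1..k. p i)"
  have "(\<Sum>i=1..<k. p i) = (\<Sum>i=1..j. p i) + (\<Sum>i=j+1..<k. p i)"
    using jk sum.atLeastLessThan_concat[of 1 "Suc j" k p] by (simp add: atLeastLessThanSuc_atLeastAtMost)
  then have gaps: "b - a = real N * p j" "c - b = real N * (\<Sum>i=j+1..<k. p i)" "d - c = real N * p k"
    unfolding a_def b_def c_def d_def using jk
    by (simp_all add: atLeastLessThanSuc_atLeastAtMost[symmetric] algebra_simps)
  have "covar unif01 (\<lambda>u. real (sys_count N p j u)) (\<lambda>u. real (sys_count N p k u)) =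
      covar unif01 (\<lambda>u. of_int (\<lfloor>b\<rfloor> - \<lfloor>a\<rfloor>) + indicator {1 - frac b<..} u - indicator {1 - frac a<..} u)
        (\<lambda>u. of_int (\<lfloor>d\<rfloor> - \<lfloor>c\<rfloor>) + indicator {1 - frac d<..} u - indicator {1 - frac c<..} u)"
    unfolding a_def b_def c_def d_def using jk
    by (intro covar_cong_AE sys_count_AE_eq[OF distr]) simp_all
  also have "\<dots> = sys_cov (b - a) (c - b) (d - c)"
    by (rule covar_unif01_indicator_frac_diff)
  finally show "covar unif01 (\<lambda>u. real (sys_count N p j u)) (\<lambda>u. real (sys_count N p k u)) =
      sys_cov (frac (real N * p j)) (frac (real N * (\<Sum>i=j+1..<k. p i))) (frac (real N * p k))"
    by (simp only: gaps sys_cov_frac)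
qed (simp_all add: sys_cov_interval_integral)

end
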